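(* Let $k\ge 2$ and $X=J(2k,k,1)\cup J(2k,k,2)\cup\cdots\cup J(2k,k,k-1)$. If $\binom{2k}{k}\equiv 0\pmod 4$, then for every vertex $A$ of $X$ there is perfect state transfer from $A$ to $\{1,\ldots,2k\}\setminus A$ at time $\pi/2$.
   Context: $J(2k,k,i)$ is the graph on the $k$-subsets of $\{1,\ldots,2k\}$ with $A\sim B$ iff $|A\cap B|=i$; the union of several such graphs is the graph on the same vertex set whose edge set is the union of their edge sets. For a simple graph $X$ with adjacency matrix $A$, let $\mathcal{H}_X(t)=e^{itA}$; there is perfect state transfer from $u$ to $v\ne u$ at time $\tau$ if $|\mathcal{H}_X(\tau)_{u,v}|=1$. *)

theory Defs
  imports Complex_Main
begin

definition ksubsets :: "nat \<Rightarrow> nat set set" where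
  "ksubsets k = {A. A \<subseteq> {1..2*k} \<and> card A = k}"

definition J_adj :: "nat \<Rightarrow> nat \<Rightarrow> nat set \<Rightarrow> nat set \<Rightarrow> bool" where
  "J_adj k i A B \<longleftrightarrow> A \<in> ksubsets k \<and> B \<in> ksubsets k \<and> card (A \<inter> B) = i"

definition X_adj :: "nat \<Rightarrow> nat set \<Rightarrow> nat set \<Rightarrow> bool" where
  "X_adj k A B \<longleftrightarrow> (\<exists>i\<in>{1..k-1}. J_adj k i A B)"

definition adj_matrix :: "('a \<Rightarrow> 'a \<Rightarrow> bool) \<Rightarrow> 'a \<Rightarrow> 'a \<Rightarrow> complex" where
  "adj_matrix E u v = (if E u v then 1 else 0)"

fun mat_pow :: "'a set \<Rightarrow> ('a \<Rightarrow> 'a \<Rightarrow> complex) \<Rightarrow> nat \<Rightarrow> 'a \<Rightarrow> 'a \<Rightarrow> complex" where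
  "mat_pow V M 0 u v = (if u = v then 1 else 0)"
| "mat_pow V M (Suc n) u v = (\<Sum>w\<in>V. M u w * mat_pow V M n w v)"

definition mat_exp :: "'a set \<Rightarrow> ('a \<Rightarrow> 'a \<Rightarrow> complex) \<Rightarrow> 'a \<Rightarrow> 'a \<Rightarrow> complex" where
  "mat_exp V M u v = (\<Sum>n. mat_pow V M n u v / of_nat (fact n))"

definition transition :: "'a set \<Rightarrow> ('a \<Rightarrow> 'a \<Rightarrow> bool) \<Rightarrow> real \<Rightarrow> 'a \<Rightarrow> 'a \<Rightarrow> complex" where
  "transition V E t = mat_exp V (\<lambda>x y. \<i> * complex_of_real t * adj_matrix E x y)"

definition pst :: "'a set \<Rightarrow> ('a \<Rightarrow> 'a \<Rightarrow> bool) \<Rightarrow> 'a \<Rightarrow> 'a \<Rightarrow> real \<Rightarrow> bool" where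
  "pst V E u v tau \<longleftrightarrow> u \<in> V \<and> v \<in> V \<and> u \<noteq> v \<and> cmod (transition V E tau u v) = 1"

end

theory Submission
  imports Defs
begin

text \<open>
  Two k-subsets of {1..2k} meet in between 1 and k-1 points unless they are equal or
  complementary, so X is the cocktail party graph on N = (2k choose k) vertices: its adjacency
  matrix is J - I - P, where P is the permutation matrix of complementation. Since I, P and J
  commute and P^2 = I, every power of A lies in their span, and summing the exponential series
  gives the (u, Pu) entry of e^(itA) as (e^(-2it) - 1)/2 + (e^(i(N-2)t) - e^(-2it))/N.
  At t = pi/2 with 4 dividing N both exponentials equal -1, so the entry is -1.
\<close>

lemma exp_series_sums: "(\<lambda>n. x^n / fact n) sums exp (x::complex)"
  using exp_converges[of x] by (simp add: scaleR_conv_of_real divide_inverse mult.commute)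

locale cocktail_party_graph =
  fixes V :: "'a set" and E :: "'a \<Rightarrow> 'a \<Rightarrow> bool" and antipode :: "'a \<Rightarrow> 'a"
  assumes finite_vertices: "finite V"
    and antipode_in: "u \<in> V \<Longrightarrow> antipode u \<in> V"
    and antipode_antipode: "u \<in> V \<Longrightarrow> antipode (antipode u) = u"
    and antipode_neq: "u \<in> V \<Longrightarrow> antipode u \<noteq> u"
    and adj_iff: "u \<in> V \<Longrightarrow> w \<in> V \<Longrightarrow> E u w \<longleftrightarrow> w \<noteq> u \<and> w \<noteq> antipode u"
begin

lemma antipode_eq_iff:
  assumes "u \<in> V" "v \<in> V"
  shows "antipode u = v \<longleftrightarrow> u = antipode v"
  using assms antipode_antipode by metis

lemma antipode_inj:
  assumes "u \<in> V" "v \<in> V"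
  shows "antipode u = antipode v \<longleftrightarrow> u = v"
  using assms antipode_antipode by metis

lemma adj_matrix_row_sum:
  assumes u: "u \<in> V"
  shows "(\<Sum>w\<in>V. adj_matrix E u w * f w) = (\<Sum>w\<in>V. f w) - f u - f (antipode u)"
proof -
  have "(\<Sum>w\<in>V. adj_matrix E u w * f w)
      = (\<Sum>w\<in>V. f w - (if w = u then f u else 0) - (if w = antipode u then f (antipode u) else 0))"
    using u antipode_neq by (intro sum.cong) (auto simp: adj_matrix_def adj_iff)
  also have "\<dots> = (\<Sum>w\<in>V. f w) - f u - f (antipode u)"
    using finite_vertices u antipode_in by (simp add: sum_subtractf)
  finally show ?thesis .
qed

lemma mat_pow_adj_matrix:
  assumes v: "v \<in> V" and u: "u \<in> V"
  defines "N \<equiv> of_nat (card V) :: complex"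
  shows "mat_pow V (\<lambda>x y. z * adj_matrix E x y) n u v
    = (if u = v then ((-2*z)^n + 0^n) / 2 else 0)
      + (if u = antipode v then ((-2*z)^n - 0^n) / 2 else 0)
      + (((N-2)*z)^n - (-2*z)^n) / N"
  using u
proof (induction n arbitrary: u)
  case 0
  then show ?case using antipode_neq[OF v] by auto
next
  case (Suc n)
  define a where "a = ((-2*z)^n + 0^n) / 2"
  define b where "b = ((-2*z)^n - 0^n) / 2"
  define c where "c = (((N-2)*z)^n - (-2*z)^n) / N"
  let ?P = "\<lambda>w. (if w = v then a else 0) + (if w = antipode v then b else 0) + c"
  have IH: "mat_pow V (\<lambda>x y. z * adj_matrix E x y) n w v = ?P w" if "w \<in> V" for w
    using Suc.IH[OF that] unfolding a_def b_def c_def by simp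
  have sum_P: "(\<Sum>w\<in>V. ?P w) = a + b + N * c"
    using finite_vertices v antipode_in[OF v] by (simp add: sum.distrib N_def)
  have "mat_pow V (\<lambda>x y. z * adj_matrix E x y) (Suc n) u v = z * (\<Sum>w\<in>V. adj_matrix E u w * ?P w)"
    by (simp add: IH sum_distrib_left mult.assoc cong: sum.cong)
  also have "\<dots> = z * (a + b + N * c - ?P u - ?P (antipode u))"
    using adj_matrix_row_sum[OF Suc.prems] sum_P by simp
  finally have step: "mat_pow V (\<lambda>x y. z * adj_matrix E x y) (Suc n) u v
      = z * (a + b + N * c - ?P u - ?P (antipode u))" .
  have N0: "N \<noteq> 0"
    using v finite_vertices unfolding N_def by (auto simp: card_eq_0_iff)
  show ?case
    unfolding step antipode_eq_iff[OF Suc.prems v] antipode_inj[OF Suc.prems v] a_def b_def c_def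
    using N0 antipode_neq[OF v]
    by (cases "u = v"; cases "u = antipode v"; simp add: field_simps)
qed

lemma transition_antipode:
  fixes t :: real
  assumes u: "u \<in> V"
  defines "N \<equiv> of_nat (card V) :: complex" and "z \<equiv> \<i> * complex_of_real t"
  shows "transition V E t u (antipode u)
    = (exp (-2*z) - 1) / 2 + (exp ((N-2)*z) - exp (-2*z)) / N"
proof -
  have entry: "mat_pow V (\<lambda>x y. z * adj_matrix E x y) n u (antipode u) / fact n
      = ((-2*z)^n / fact n - 0^n / fact n) / 2 + (((N-2)*z)^n / fact n - (-2*z)^n / fact n) / N"
    for n
    using mat_pow_adj_matrix[OF antipode_in[OF u] u, of z n] antipode_neq[OF u] u
    by (simp add: antipode_antipode N_def diff_divide_distrib add_divide_distrib mult.commute)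
  have "(\<lambda>n. mat_pow V (\<lambda>x y. z * adj_matrix E x y) n u (antipode u) / fact n)
      sums ((exp (-2*z) - exp 0) / 2 + (exp ((N-2)*z) - exp (-2*z)) / N)"
    unfolding entry by (intro sums_add sums_divide sums_diff exp_series_sums)
  then show ?thesis
    unfolding transition_def mat_exp_def z_def by (simp add: sums_iff)
qed

lemma pst_antipode_pi_half:
  assumes u: "u \<in> V" and "4 dvd card V"
  shows "pst V E u (antipode u) (pi / 2)"
proof -
  obtain m where m: "card V = 4 * m" using assms(2) by blast
  define z where "z = \<i> * complex_of_real (pi / 2)"
  have "-2 * z = - (\<i> * pi)" unfolding z_def by simp
  then have exp1: "exp (-2 * z) = -1" by (simp add: exp_minus)
  have "(of_nat (card V) - 2) * z = of_nat m * (2 * pi * \<i>) - \<i> * pi"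
    unfolding m z_def by (simp add: field_simps)
  then have exp2: "exp ((of_nat (card V) - 2) * z) = -1"
    by (simp add: exp_diff exp_of_nat_mult)
  have "transition V E (pi / 2) u (antipode u) = -1"
    using transition_antipode[OF u, of "pi / 2"] unfolding z_def[symmetric] exp1 exp2 by simp
  then show ?thesis
    unfolding pst_def using u antipode_in[OF u] antipode_neq[OF u] by auto
qed

end

lemma finite_ksubsets: "finite (ksubsets k)"
  by (rule finite_subset[of _ "Pow {1..2*k}"]) (auto simp: ksubsets_def)

lemma card_ksubsets: "card (ksubsets k) = (2*k choose k)"
  using n_subsets[of "{1..2*k}" k] by (simp add: ksubsets_def)

lemma complement_in_ksubsets:
  assumes "A \<in> ksubsets k"
  shows "{1..2*k} - A \<in> ksubsets k"
proof -
  have "A \<subseteq> {1..2*k}" "card A = k" using assms by (auto simp: ksubsets_def)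
  then have "card ({1..2*k} - A) = k" by (simp add: card_Diff_subset finite_subset)
  then show ?thesis by (simp add: ksubsets_def)
qed

lemma card_inter_ksubsets_eq_k_iff:
  assumes "A \<in> ksubsets k" "B \<in> ksubsets k"
  shows "card (A \<inter> B) = k \<longleftrightarrow> B = A"
proof
  have fin: "finite A" "finite B" using assms by (auto simp: ksubsets_def intro: finite_subset)
  assume "card (A \<inter> B) = k"
  then have "card (A \<inter> B) = card A" "card (A \<inter> B) = card B"
    using assms by (auto simp: ksubsets_def)
  then have "A \<inter> B = A" and "A \<inter> B = B"
    using fin by (metis card_subset_eq inf_le1 inf_le2)+
  then show "B = A" by blast
qed (use assms in \<open>simp add: ksubsets_def\<close>)

lemma card_inter_ksubsets_eq_0_iff:
  assumes "A \<in> ksubsets k" "B \<in> ksubsets k"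
  shows "card (A \<inter> B) = 0 \<longleftrightarrow> B = {1..2*k} - A"
proof
  have fin: "finite A" "finite B" using assms by (auto simp: ksubsets_def intro: finite_subset)
  assume "card (A \<inter> B) = 0"
  then have "B \<subseteq> {1..2*k} - A" using assms fin by (auto simp: ksubsets_def)
  moreover have "card ({1..2*k} - A) = card B"
    using complement_in_ksubsets[OF assms(1)] assms(2) by (simp add: ksubsets_def)
  ultimately show "B = {1..2*k} - A" by (simp add: card_subset_eq)
qed auto

lemma X_adj_iff:
  assumes "A \<in> ksubsets k" "B \<in> ksubsets k"
  shows "X_adj k A B \<longleftrightarrow> B \<noteq> A \<and> B \<noteq> {1..2*k} - A"
proof -
  have "finite A" "card A = k" using assms(1) by (auto simp: ksubsets_def intro: finite_subset)
  then have "card (A \<inter> B) \<le> k" by (metis card_mono inf_le1)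
  then have "X_adj k A B \<longleftrightarrow> card (A \<inter> B) \<noteq> k \<and> card (A \<inter> B) \<noteq> 0"
    using assms unfolding X_adj_def J_adj_def by auto
  then show ?thesis
    using card_inter_ksubsets_eq_k_iff[OF assms] card_inter_ksubsets_eq_0_iff[OF assms] by simp
qed

lemma X_cocktail_party_graph:
  assumes "k \<ge> 1"
  shows "cocktail_party_graph (ksubsets k) (X_adj k) (\<lambda>A. {1..2*k} - A)"
proof (unfold_locales)
  fix A assume A: "A \<in> ksubsets k"
  show "{1..2*k} - A \<in> ksubsets k" using complement_in_ksubsets[OF A] .
  show "{1..2*k} - ({1..2*k} - A) = A" using A by (auto simp: ksubsets_def)
  show "{1..2*k} - A \<noteq> A"
  proof
    assume "{1..2*k} - A = A"
    then have "A = {}" by blast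
    then show False using A assms by (simp add: ksubsets_def)
  qed
  show "X_adj k A B \<longleftrightarrow> B \<noteq> A \<and> B \<noteq> {1..2*k} - A" if "B \<in> ksubsets k" for B
    using X_adj_iff[OF A that] .
qed (rule finite_ksubsets)

theorem mainTheorem18:
  fixes k :: nat and A :: "nat set"
  assumes "k \<ge> 2"
    and "(2*k choose k) mod 4 = 0"
    and "A \<in> ksubsets k"
  shows "pst (ksubsets k) (X_adj k) A ({1..2*k} - A) (pi / 2)"
proof -
  interpret cocktail_party_graph "ksubsets k" "X_adj k" "\<lambda>A. {1..2*k} - A"
    using X_cocktail_party_graph assms(1) by simp
  show ?thesis
    using pst_antipode_pi_half[OF assms(3)] assms(2) by (simp add: card_ksubsets mod_0_imp_dvd)
qed

end
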